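(* If $\mathcal{X}=[0,1]$ with its usual topology (and Borel $\sigma$-algebra), then $\mathrm{FMV}=\mathrm{FS}$.
   Context: $\mathrm{FS}$: the set of processes $\mathbb{X}=(X_t)_{t\ge1}$ in $\mathcal{X}$ taking finitely many distinct values a.s. $\mathrm{FMV}$: the set of processes $\mathbb{X}$ such that for every countable partition $\{A_k\}_{k\ge1}$ of $\mathcal{X}$ into Borel sets, a.s. only finitely many $A_k$ contain some $X_t$. *)

theory Defs
  imports "HOL-Probability.Probability"
begin

definition process_in :: "'b measure \<Rightarrow> 'a measure \<Rightarrow> (nat \<Rightarrow> 'a \<Rightarrow> 'b) \<Rightarrow> bool" where
  "process_in N M X \<longleftrightarrow> (\<forall>t\<ge>1. X t \<in> measurable M N)"

definition FS :: "'a measure \<Rightarrow> (nat \<Rightarrow> 'a \<Rightarrow> 'b) \<Rightarrow> bool" where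
  "FS M X \<longleftrightarrow> (AE \<omega> in M. finite ((\<lambda>t. X t \<omega>) ` {1..}))"

text \<open>FMV: for every countable partition (A_k) of the value space into measurable sets,
almost surely only finitely many A_k contain some X_t. Finite partitions are covered
by allowing empty parts.\<close>
definition FMV :: "'b measure \<Rightarrow> 'a measure \<Rightarrow> (nat \<Rightarrow> 'a \<Rightarrow> 'b) \<Rightarrow> bool" where
  "FMV N M X \<longleftrightarrow>
     (\<forall>A :: nat \<Rightarrow> 'b set. (\<forall>k. A k \<in> sets N) \<and> disjoint_family A \<and> (\<Union>k. A k) = space N \<longrightarrow>
        (AE \<omega> in M. finite {k. \<exists>t\<ge>1. X t \<omega> \<in> A k}))"

end

theory Submission
  imports Defs
begin

text \<open>FS implies FMV because every value lies in at most one part of a partition.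
  Conversely, suppose the paths take infinitely many values with probability \<open>\<eta> > 0\<close>.
  Inside a region \<open>R\<close> where a path has infinitely many values, a random union \<open>G\<close> of
  dyadic cells of a fine level is hit by the path while \<open>R - G\<close> still carries infinitely
  many of its values, except with small probability: it suffices that the cell carrying
  infinitely many values is left out and one of the many other hit cells is taken.
  Averaging, some deterministic \<open>G\<close> works for all but \<open>\<epsilon>\<close> of the paths. Iterating with
  \<open>\<epsilon> = \<eta> / 2 ^ (n + 2)\<close> yields disjoint Borel sets \<open>G\<^sub>0, G\<^sub>1, \<dots>\<close> all of which are hit
  with probability at least \<open>\<eta> / 2\<close>; together with the complement of their union they
  form a partition of \<open>[0, 1]\<close> violating FMV.\<close>

definition dyadic_index :: "nat \<Rightarrow> real \<Rightarrow> int" where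
  "dyadic_index m x = \<lfloor>2 ^ m * x\<rfloor>"

lemma measurable_dyadic_index [measurable]: "dyadic_index m \<in> borel \<rightarrow>\<^sub>M count_space UNIV"
  unfolding dyadic_index_def by measurable

lemma dyadic_index_in_range:
  assumes "x \<in> {0..1}"
  shows "dyadic_index m x \<in> {0..2 ^ m}"
proof -
  have "2 ^ m * x \<le> 2 ^ m * 1"
    using assms by (intro mult_left_mono) auto
  then have "2 ^ m * x < 2 ^ m + 1"
    by linarith
  moreover have "0 \<le> 2 ^ m * x"
    using assms by simp
  ultimately show ?thesis
    unfolding dyadic_index_def by (simp add: floor_le_iff)
qed

lemma dyadic_index_Suc_div: "dyadic_index (Suc m) x div 2 = dyadic_index m x"
proof -
  have "dyadic_index m x = \<lfloor>2 ^ Suc m * x / of_int 2\<rfloor>"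
    unfolding dyadic_index_def by simp
  also have "\<dots> = dyadic_index (Suc m) x div 2"
    unfolding dyadic_index_def by (subst floor_divide_real_eq_div) auto
  finally show ?thesis ..
qed

lemma eventually_dyadic_index_less:
  assumes "x < y"
  shows "\<forall>\<^sub>F m in sequentially. dyadic_index m x < dyadic_index m y"
proof -
  obtain n where "1 / (y - x) < 2 ^ n"
    using real_arch_pow[of 2] by auto
  then have "\<forall>\<^sub>F m in sequentially. 1 / (y - x) < 2 ^ m"
    unfolding eventually_sequentially
    by (meson less_le_trans one_le_numeral power_increasing)
  then show ?thesis
  proof eventually_elim
    case (elim m)
    then have "2 ^ m * x + 1 < 2 ^ m * y"
      using assms by (simp add: field_simps)
    then have "\<lfloor>2 ^ m * x\<rfloor> + 1 \<le> \<lfloor>2 ^ m * y\<rfloor>"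
      by (metis floor_add_int floor_mono less_le of_int_1)
    then show ?case
      unfolding dyadic_index_def by simp
  qed
qed

lemma eventually_inj_on_dyadic_index:
  assumes "finite F"
  shows "\<forall>\<^sub>F m in sequentially. inj_on (dyadic_index m) F"
proof -
  have "finite {(x, y) \<in> F \<times> F. x < y}"
    using assms by (auto intro: finite_subset)
  then have "\<forall>\<^sub>F m in sequentially. \<forall>(x, y) \<in> {(x, y) \<in> F \<times> F. x < y}. dyadic_index m x < dyadic_index m y"
    by (rule eventually_ball_finite) (auto intro: eventually_dyadic_index_less)
  then show ?thesis
    by eventually_elim (auto simp: inj_on_def, metis less_irrefl linorder_neq_iff)
qed

lemma pred_less_card_Collect:
  assumes "finite I" and [measurable]: "\<And>i. i \<in> I \<Longrightarrow> Measurable.pred M (P i)"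
  shows "Measurable.pred M (\<lambda>\<omega>. k < card {i\<in>I. P i \<omega>})"
proof -
  have "card {i\<in>I. P i \<omega>} = (\<Sum>i\<in>I. if P i \<omega> then 1 else 0)" for \<omega>
    using assms(1) by (simp add: sum.If_cases Int_def)
  then show ?thesis
    using assms(1) by simp measurable
qed

lemma sets_Collect_restrict:
  assumes "A \<in> sets M" "Measurable.pred M P"
  shows "{x\<in>A. P x} \<in> sets M"
proof -
  have "{x\<in>A. P x} = {x\<in>space M. x \<in> A \<and> P x}"
    using sets.sets_into_space[OF assms(1)] by blast
  also have "\<dots> \<in> sets M"
    using assms by measurable
  finally show ?thesis .
qed

lemma measure_Pi_bernoulli_all_eq:
  assumes "finite I" "J \<subseteq> I" "p \<in> {0..1}"
  shows "measure_pmf.prob (Pi_pmf I False (\<lambda>_. bernoulli_pmf p)) {L. \<forall>i\<in>J. L i = b}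
      = (if b then p else 1 - p) ^ card J"
proof -
  have "{L. \<forall>i\<in>J. L i = b} = Pi I (\<lambda>i. if i \<in> J then {b} else UNIV)"
    using assms(2) by (auto simp: Pi_def)
  then have "measure_pmf.prob (Pi_pmf I False (\<lambda>_. bernoulli_pmf p)) {L. \<forall>i\<in>J. L i = b}
      = (\<Prod>i\<in>I. measure_pmf.prob (bernoulli_pmf p) (if i \<in> J then {b} else UNIV))"
    using assms(1) by (simp add: measure_Pi_pmf_Pi)
  also have "\<dots> = (\<Prod>i\<in>I. if i \<in> J then (if b then p else 1 - p) else 1)"
    using assms(3) by (intro prod.cong) (auto simp: measure_pmf_single)
  also have "\<dots> = (if b then p else 1 - p) ^ card J"
    using assms(1,2) by (simp add: prod.If_cases Int_absorb1)
  finally show ?thesis .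
qed

lemma measure_pmf_eq_sum_indicator:
  assumes "finite (set_pmf Q)"
  shows "measure_pmf.prob Q A = (\<Sum>L\<in>set_pmf Q. pmf Q L * indicator A L)"
proof -
  have "measure_pmf.prob Q A = measure_pmf.prob Q (A \<inter> set_pmf Q)"
    by (rule measure_Int_set_pmf[symmetric])
  also have "\<dots> = sum (pmf Q) (A \<inter> set_pmf Q)"
    using assms by (intro measure_measure_pmf_finite) auto
  also have "\<dots> = (\<Sum>L\<in>set_pmf Q. pmf Q L * indicator A L)"
    using assms by (simp add: indicator_def sum.If_cases Int_commute)
  finally show ?thesis .
qed

text \<open>The probabilistic method: some member of a random family of events is at most as likely as
  the family is on average.\<close>

lemma (in prob_space) ex_measure_le_of_random_family:
  fixes Q :: "'b pmf" and B :: "'b \<Rightarrow> 'a set"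
  assumes fin: "finite (set_pmf Q)" and B: "\<And>L. B L \<in> sets M" and D: "D \<in> sets M"
    and bound: "\<And>\<omega>. \<omega> \<in> space M \<Longrightarrow> measure_pmf.prob Q {L. \<omega> \<in> B L} \<le> c + indicator D \<omega>"
  shows "\<exists>L. measure M (B L) \<le> c + measure M D"
proof (rule ccontr)
  assume "\<not> ?thesis"
  then have less: "c + measure M D < measure M (B L)" for L
    by (simp add: not_le)
  have int_B: "integrable M (indicator (B L) :: 'a \<Rightarrow> real)" for L
    using B by (intro integrable_real_indicator) (auto simp: emeasure_finite less_top[symmetric])
  have int_D: "integrable M (indicator D :: 'a \<Rightarrow> real)"
    using D by (intro integrable_real_indicator) (auto simp: emeasure_finite less_top[symmetric])
  have "c + measure M D = (\<Sum>L\<in>set_pmf Q. pmf Q L * (c + measure M D))"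
    using fin by (simp add: sum_distrib_right[symmetric] sum_pmf_eq_1)
  also have "\<dots> < (\<Sum>L\<in>set_pmf Q. pmf Q L * measure M (B L))"
    using fin less by (intro sum_strict_mono mult_strict_left_mono) (auto simp: set_pmf_not_empty pmf_positive)
  also have "\<dots> = (\<integral>\<omega>. (\<Sum>L\<in>set_pmf Q. pmf Q L * indicator (B L) \<omega>) \<partial>M)"
    using int_B B by (simp add: integral_sum integral_indicator emeasure_finite less_top[symmetric])
  also have "\<dots> \<le> (\<integral>\<omega>. c + indicator D \<omega> \<partial>M)"
    using bound
    by (intro integral_mono Bochner_Integration.integrable_sum integrable_mult_right
        Bochner_Integration.integrable_add integrable_const int_B int_D)
      (auto simp: measure_pmf_eq_sum_indicator[OF fin] indicator_def)
  also have "\<dots> = c + measure M D"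
    using int_D D by (simp add: integral_indicator emeasure_finite less_top[symmetric] prob_space)
  finally show False
    by simp
qed

locale unit_interval_process = prob_space M for M :: "'a measure" +
  fixes Y :: "nat \<Rightarrow> 'a \<Rightarrow> real"
  assumes measurable_Y [measurable]: "\<And>t. Y t \<in> borel_measurable M"
    and Y_in_unit_interval: "\<And>t \<omega>. \<omega> \<in> space M \<Longrightarrow> Y t \<omega> \<in> {0..1}"
begin

definition vals :: "'a \<Rightarrow> real set" where
  "vals \<omega> = range (\<lambda>t. Y t \<omega>)"

definition hits :: "real set \<Rightarrow> 'a \<Rightarrow> bool" where
  "hits S \<omega> \<longleftrightarrow> (\<exists>t. Y t \<omega> \<in> S)"

definition infinitely_hits :: "real set \<Rightarrow> 'a \<Rightarrow> bool" where
  "infinitely_hits S \<omega> \<longleftrightarrow> infinite (vals \<omega> \<inter> S)"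

definition cells_hit :: "real set \<Rightarrow> nat \<Rightarrow> 'a \<Rightarrow> int set" where
  "cells_hit R m \<omega> = dyadic_index m ` (vals \<omega> \<inter> R)"

lemma hits_iff_vals: "hits S \<omega> \<longleftrightarrow> vals \<omega> \<inter> S \<noteq> {}"
  unfolding hits_def vals_def by auto

lemma vals_subset_unit_interval: "\<omega> \<in> space M \<Longrightarrow> vals \<omega> \<subseteq> {0..1}"
  unfolding vals_def using Y_in_unit_interval by auto

lemma pred_hits [measurable]:
  assumes [measurable]: "S \<in> sets borel"
  shows "Measurable.pred M (hits S)"
  unfolding hits_def by measurable

lemma finite_vals_Int_iff:
  "finite (vals \<omega> \<inter> S) \<longleftrightarrow> (\<exists>N. \<forall>t. Y t \<omega> \<in> S \<longrightarrow> (\<exists>s\<le>N. Y s \<omega> = Y t \<omega>))"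
proof
  assume fin: "finite (vals \<omega> \<inter> S)"
  have "vals \<omega> \<inter> S \<subseteq> (\<lambda>t. Y t \<omega>) ` {t. Y t \<omega> \<in> S}"
    unfolding vals_def by auto
  then obtain C where C: "finite C" "vals \<omega> \<inter> S = (\<lambda>t. Y t \<omega>) ` C"
    using finite_subset_image[OF fin] by meson
  obtain N where N: "\<forall>s\<in>C. s \<le> N"
    using C(1) finite_nat_set_iff_bounded_le by blast
  have "\<forall>t. Y t \<omega> \<in> S \<longrightarrow> (\<exists>s\<le>N. Y s \<omega> = Y t \<omega>)"
  proof (intro allI impI)
    fix t assume "Y t \<omega> \<in> S"
    then have "Y t \<omega> \<in> (\<lambda>t. Y t \<omega>) ` C"
      using C(2) unfolding vals_def by blast
    then obtain s where "s \<in> C" "Y s \<omega> = Y t \<omega>"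
      by (auto simp del: Int_iff)
    with N show "\<exists>s\<le>N. Y s \<omega> = Y t \<omega>"
      by blast
  qed
  then show "\<exists>N. \<forall>t. Y t \<omega> \<in> S \<longrightarrow> (\<exists>s\<le>N. Y s \<omega> = Y t \<omega>)"
    by blast
next
  assume "\<exists>N. \<forall>t. Y t \<omega> \<in> S \<longrightarrow> (\<exists>s\<le>N. Y s \<omega> = Y t \<omega>)"
  then obtain N where N: "\<And>t. Y t \<omega> \<in> S \<Longrightarrow> \<exists>s\<le>N. Y s \<omega> = Y t \<omega>"
    by blast
  have "vals \<omega> \<inter> S \<subseteq> (\<lambda>s. Y s \<omega>) ` {..N}"
  proof
    fix v assume "v \<in> vals \<omega> \<inter> S"
    then obtain t where "Y t \<omega> \<in> S" "v = Y t \<omega>"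
      unfolding vals_def by blast
    then show "v \<in> (\<lambda>s. Y s \<omega>) ` {..N}"
      using N by (metis atMost_iff image_eqI)
  qed
  then show "finite (vals \<omega> \<inter> S)"
    by (rule finite_subset) simp
qed

lemma pred_infinitely_hits [measurable]:
  assumes [measurable]: "S \<in> sets borel"
  shows "Measurable.pred M (infinitely_hits S)"
  unfolding infinitely_hits_def finite_vals_Int_iff by measurable

lemma cells_hit_subset: "\<omega> \<in> space M \<Longrightarrow> cells_hit R m \<omega> \<subseteq> {0..2 ^ m}"
  unfolding cells_hit_def using vals_subset_unit_interval
  by (intro image_subsetI dyadic_index_in_range) blast

lemma finite_cells_hit: "\<omega> \<in> space M \<Longrightarrow> finite (cells_hit R m \<omega>)"
  by (rule finite_subset[OF cells_hit_subset]) simp_all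

lemma pred_less_card_cells_hit [measurable]:
  assumes [measurable]: "R \<in> sets borel"
  shows "Measurable.pred M (\<lambda>\<omega>. k < card (cells_hit R m \<omega>))"
proof -
  have "Measurable.pred M (\<lambda>\<omega>. k < card {i \<in> {0..2 ^ m}. hits (R \<inter> {x. dyadic_index m x = i}) \<omega>})"
    by (rule pred_less_card_Collect) auto
  moreover have "cells_hit R m \<omega> = {i \<in> {0..2 ^ m}. hits (R \<inter> {x. dyadic_index m x = i}) \<omega>}"
    if "\<omega> \<in> space M" for \<omega>
    using cells_hit_subset[OF that] unfolding cells_hit_def hits_iff_vals by blast
  ultimately show ?thesis
    by (subst measurable_cong) auto
qed

lemma cells_hit_Suc: "cells_hit R m \<omega> = (\<lambda>i. i div 2) ` cells_hit R (Suc m) \<omega>"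
  unfolding cells_hit_def image_image dyadic_index_Suc_div ..

lemma card_cells_hit_mono:
  assumes "\<omega> \<in> space M" "m \<le> m'"
  shows "card (cells_hit R m \<omega>) \<le> card (cells_hit R m' \<omega>)"
  using assms(2)
proof (induction m' rule: dec_induct)
  case (step m')
  have "card (cells_hit R m' \<omega>) \<le> card (cells_hit R (Suc m') \<omega>)"
    unfolding cells_hit_Suc[of R m'] by (rule card_image_le[OF finite_cells_hit[OF assms(1)]])
  with step.IH show ?case
    by linarith
qed simp

lemma ex_many_cells_hit:
  assumes "\<omega> \<in> space M" "infinitely_hits R \<omega>"
  shows "\<exists>m. k < card (cells_hit R m \<omega>)"
proof -
  obtain F where F: "F \<subseteq> vals \<omega> \<inter> R" "finite F" "card F = Suc k"
    using assms(2) infinite_arbitrarily_large unfolding infinitely_hits_def by blast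
  obtain m where "inj_on (dyadic_index m) F"
    using eventually_happens'[OF sequentially_bot eventually_inj_on_dyadic_index[OF F(2)]] ..
  then have "card (dyadic_index m ` F) = Suc k"
    using F(3) card_image by metis
  moreover have "card (dyadic_index m ` F) \<le> card (cells_hit R m \<omega>)"
    using F(1) finite_cells_hit[OF assms(1), of R m]
    unfolding cells_hit_def by (intro card_mono image_mono)
  ultimately show ?thesis
    by (intro exI[of _ m]) linarith
qed

lemma ex_cell_infinitely_hit:
  assumes "\<omega> \<in> space M" "infinitely_hits R \<omega>"
  shows "\<exists>h \<in> cells_hit R m \<omega>. infinitely_hits (R \<inter> {x. dyadic_index m x = h}) \<omega>"
proof -
  obtain x where x: "x \<in> vals \<omega> \<inter> R"
    and inf: "infinite {y \<in> vals \<omega> \<inter> R. dyadic_index m y = dyadic_index m x}"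
    using pigeonhole_infinite[of "vals \<omega> \<inter> R" "dyadic_index m"] assms finite_cells_hit
    unfolding infinitely_hits_def cells_hit_def by blast
  have "{y \<in> vals \<omega> \<inter> R. dyadic_index m y = dyadic_index m x}
      = vals \<omega> \<inter> (R \<inter> {y. dyadic_index m y = dyadic_index m x})"
    by auto
  with x inf show ?thesis
    unfolding infinitely_hits_def cells_hit_def by auto
qed

lemma prob_random_cells_fail_le:
  assumes \<omega>: "\<omega> \<in> space M" and inf: "infinitely_hits R \<omega>" and p: "p \<in> {0..1}"
  shows "measure_pmf.prob (Pi_pmf {0..2 ^ m} False (\<lambda>_. bernoulli_pmf p))
      {L. \<not> (hits (R \<inter> {x. L (dyadic_index m x)}) \<omega> \<and> infinitely_hits (R - {x. L (dyadic_index m x)}) \<omega>)}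
    \<le> p + (1 - p) ^ (card (cells_hit R m \<omega>) - 1)"
    (is "measure_pmf.prob ?Q ?fail \<le> _")
proof -
  obtain h where h: "h \<in> cells_hit R m \<omega>" "infinitely_hits (R \<inter> {x. dyadic_index m x = h}) \<omega>"
    using ex_cell_infinitely_hit[OF \<omega> inf] by blast
  define B where "B = cells_hit R m \<omega> - {h}"
  have "?fail \<subseteq> {L. \<forall>i\<in>{h}. L i = True} \<union> {L. \<forall>i\<in>B. L i = False}"
  proof (intro subsetI, rule ccontr)
    fix L assume L: "L \<in> ?fail" and "L \<notin> {L. \<forall>i\<in>{h}. L i = True} \<union> {L. \<forall>i\<in>B. L i = False}"
    then obtain b where "\<not> L h" "b \<in> B" "L b"
      by auto
    then have "hits (R \<inter> {x. L (dyadic_index m x)}) \<omega>"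
      unfolding B_def cells_hit_def hits_iff_vals by auto
    moreover have "vals \<omega> \<inter> (R \<inter> {x. dyadic_index m x = h}) \<subseteq> vals \<omega> \<inter> (R - {x. L (dyadic_index m x)})"
      using \<open>\<not> L h\<close> by auto
    then have "infinitely_hits (R - {x. L (dyadic_index m x)}) \<omega>"
      using h(2) infinite_super unfolding infinitely_hits_def by blast
    ultimately show False
      using L by simp
  qed
  then have "measure_pmf.prob ?Q ?fail
      \<le> measure_pmf.prob ?Q ({L. \<forall>i\<in>{h}. L i = True} \<union> {L. \<forall>i\<in>B. L i = False})"
    by (intro measure_pmf.finite_measure_mono) auto
  also have "\<dots> \<le> measure_pmf.prob ?Q {L. \<forall>i\<in>{h}. L i = True} + measure_pmf.prob ?Q {L. \<forall>i\<in>B. L i = False}"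
    by (rule measure_Un_le) auto
  also have "\<dots> = p + (1 - p) ^ card B"
    using cells_hit_subset[OF \<omega>, of R m] h(1) p unfolding B_def
    by (subst (1 2) measure_Pi_bernoulli_all_eq) auto
  also have "card B = card (cells_hit R m \<omega>) - 1"
    unfolding B_def using h(1) finite_cells_hit[OF \<omega>] by (simp add: card_Diff_singleton)
  finally show ?thesis .
qed

lemma tendsto_measure_many_cells_hit:
  assumes [measurable]: "R \<in> sets borel" "\<Gamma> \<in> sets M"
    and inf: "\<And>\<omega>. \<omega> \<in> \<Gamma> \<Longrightarrow> infinitely_hits R \<omega>"
  shows "(\<lambda>m. measure M {\<omega>\<in>\<Gamma>. k < card (cells_hit R m \<omega>)}) \<longlonglongrightarrow> measure M \<Gamma>"
proof -
  have "\<Gamma> \<subseteq> space M"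
    using sets.sets_into_space assms(2) .
  have "(\<Union>m. {\<omega>\<in>\<Gamma>. k < card (cells_hit R m \<omega>)}) = \<Gamma>"
  proof (intro equalityI subsetI)
    fix \<omega> assume "\<omega> \<in> \<Gamma>"
    then obtain m where "k < card (cells_hit R m \<omega>)"
      using ex_many_cells_hit inf \<open>\<Gamma> \<subseteq> space M\<close> by blast
    with \<open>\<omega> \<in> \<Gamma>\<close> show "\<omega> \<in> (\<Union>m. {\<omega>\<in>\<Gamma>. k < card (cells_hit R m \<omega>)})"
      by blast
  qed auto
  moreover have "incseq (\<lambda>m. {\<omega>\<in>\<Gamma>. k < card (cells_hit R m \<omega>)})"
  proof (intro monoI subsetI)
    fix m m' \<omega> assume "m \<le> m'" "\<omega> \<in> {\<omega>\<in>\<Gamma>. k < card (cells_hit R m \<omega>)}"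
    then show "\<omega> \<in> {\<omega>\<in>\<Gamma>. k < card (cells_hit R m' \<omega>)}"
      using card_cells_hit_mono[of \<omega> m m' R] \<open>\<Gamma> \<subseteq> space M\<close> by auto
  qed
  moreover have "{\<omega>\<in>\<Gamma>. k < card (cells_hit R m \<omega>)} \<in> sets M" for m
    by (intro sets_Collect_restrict assms) measurable
  ultimately show ?thesis
    using finite_Lim_measure_incseq[of "\<lambda>m. {\<omega>\<in>\<Gamma>. k < card (cells_hit R m \<omega>)}"]
    by (simp add: image_subset_iff)
qed

lemma ex_borel_subset_hit_with_infinite_rest:
  assumes R [measurable]: "R \<in> sets borel" and \<Gamma> [measurable]: "\<Gamma> \<in> sets M"
    and inf: "\<And>\<omega>. \<omega> \<in> \<Gamma> \<Longrightarrow> infinitely_hits R \<omega>" and \<epsilon>: "0 < \<epsilon>"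
  shows "\<exists>G\<in>sets borel. G \<subseteq> R \<and>
    measure M (\<Gamma> - {\<omega>\<in>space M. hits G \<omega> \<and> infinitely_hits (R - G) \<omega>}) \<le> \<epsilon>"
proof -
  define p where "p = min 1 (\<epsilon> / 2)"
  have p: "p \<in> {0..1}" "0 < p" "p \<le> \<epsilon> / 2"
    using \<epsilon> unfolding p_def by auto
  obtain K where K: "(1 - p) ^ K < \<epsilon> / 4"
    using real_arch_pow_inv[of "\<epsilon> / 4" "1 - p"] p(2) \<epsilon> by auto
  define E where "E = (\<lambda>m. {\<omega>\<in>\<Gamma>. K < card (cells_hit R m \<omega>)})"
  have "\<forall>\<^sub>F m in sequentially. measure M \<Gamma> - \<epsilon> / 4 < measure M (E m)"
    unfolding E_def using tendsto_measure_many_cells_hit[OF R \<Gamma> inf] \<epsilon>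
    by (intro order_tendstoD(1)) auto
  then obtain m where m: "measure M \<Gamma> - \<epsilon> / 4 < measure M (E m)"
    unfolding eventually_sequentially by blast
  have E_sets: "E m \<in> sets M"
    unfolding E_def by (intro sets_Collect_restrict \<Gamma>) measurable
  have "measure M (\<Gamma> - E m) = measure M \<Gamma> - measure M (E m)"
    using E_sets by (intro finite_measure_Diff \<Gamma>) (auto simp: E_def)
  with m have small: "measure M (\<Gamma> - E m) < \<epsilon> / 4"
    by linarith
  define Q where "Q = Pi_pmf {0..(2::int) ^ m} False (\<lambda>_. bernoulli_pmf p)"
  define G where "G = (\<lambda>L. R \<inter> {x. L (dyadic_index m x)})"
  define Fail where "Fail = (\<lambda>L. \<Gamma> - {\<omega>\<in>space M. hits (G L) \<omega> \<and> infinitely_hits (R - G L) \<omega>})"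
  have G_sets [measurable]: "G L \<in> sets borel" for L
    unfolding G_def by measurable
  have "\<exists>L. measure M (Fail L) \<le> (p + (1 - p) ^ K) + measure M (\<Gamma> - E m)"
  proof (rule ex_measure_le_of_random_family)
    have "set_pmf Q \<subseteq> PiE_dflt {0..2 ^ m} False (set_pmf \<circ> (\<lambda>_. bernoulli_pmf p))"
      unfolding Q_def by (rule set_Pi_pmf_subset') simp
    then show "finite (set_pmf Q)"
      by (rule finite_subset) auto
    show "Fail L \<in> sets M" for L
      unfolding Fail_def by measurable
    show "\<Gamma> - E m \<in> sets M"
      using E_sets by simp
  next
    fix \<omega> assume \<omega>: "\<omega> \<in> space M"
    consider "\<omega> \<in> E m" | "\<omega> \<in> \<Gamma> - E m" | "\<omega> \<notin> \<Gamma>"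
      unfolding E_def by blast
    then show "measure_pmf.prob Q {L. \<omega> \<in> Fail L} \<le> p + (1 - p) ^ K + indicator (\<Gamma> - E m) \<omega>"
    proof cases
      case 1
      then have "K \<le> card (cells_hit R m \<omega>) - 1" and "infinitely_hits R \<omega>"
        using inf unfolding E_def by auto
      have "R - G L = R - {x. L (dyadic_index m x)}" for L
        unfolding G_def by blast
      then have "{L. \<omega> \<in> Fail L} \<subseteq> {L. \<not> (hits (R \<inter> {x. L (dyadic_index m x)}) \<omega>
          \<and> infinitely_hits (R - {x. L (dyadic_index m x)}) \<omega>)}"
        using \<omega> unfolding Fail_def G_def by auto
      then have "measure_pmf.prob Q {L. \<omega> \<in> Fail L} \<le> measure_pmf.prob Q {L. \<not> (hits (R \<inter> {x. L (dyadic_index m x)}) \<omega>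
          \<and> infinitely_hits (R - {x. L (dyadic_index m x)}) \<omega>)}"
        by (rule measure_pmf.finite_measure_mono) simp
      also have "\<dots> \<le> p + (1 - p) ^ (card (cells_hit R m \<omega>) - 1)"
        unfolding Q_def using \<omega> \<open>infinitely_hits R \<omega>\<close> p(1) by (rule prob_random_cells_fail_le)
      also have "\<dots> \<le> p + (1 - p) ^ K"
        using p \<open>K \<le> _\<close> by (intro add_left_mono power_decreasing) auto
      finally show ?thesis
        using 1 by simp
    next
      case 2
      have "measure_pmf.prob Q {L. \<omega> \<in> Fail L} \<le> 1" "0 \<le> (1 - p) ^ K"
        using p by (simp_all add: measure_pmf.prob_le_1)
      moreover have "indicator (\<Gamma> - E m) \<omega> = (1::real)"
        using 2 by simp
      ultimately show ?thesis
        using p by linarith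
    next
      case 3
      then show ?thesis
        using p by (simp add: Fail_def)
    qed
  qed
  then obtain L where "measure M (Fail L) \<le> p + (1 - p) ^ K + measure M (\<Gamma> - E m)"
    by blast
  with p K small have "measure M (Fail L) \<le> \<epsilon>"
    by linarith
  then show ?thesis
    unfolding Fail_def by (intro bexI[of _ "G L"]) (auto simp: G_def)
qed

lemma obtain_refinement:
  assumes R [measurable]: "R \<in> sets borel" and \<Gamma> [measurable]: "\<Gamma> \<in> sets M"
    and inf: "\<forall>\<omega>\<in>\<Gamma>. infinitely_hits R \<omega>" and \<epsilon>: "0 < \<epsilon>"
  obtains R' \<Gamma>' where "R' \<in> sets borel" "\<Gamma>' \<in> sets M" "\<forall>\<omega>\<in>\<Gamma>'. infinitely_hits R' \<omega>"
    "measure M \<Gamma> - \<epsilon> \<le> measure M \<Gamma>'" "R' \<subseteq> R" "\<Gamma>' \<subseteq> \<Gamma>" "\<forall>\<omega>\<in>\<Gamma>'. hits (R - R') \<omega>"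
proof -
  obtain G where G [measurable]: "G \<in> sets borel" "G \<subseteq> R"
    and small: "measure M (\<Gamma> - {\<omega>\<in>space M. hits G \<omega> \<and> infinitely_hits (R - G) \<omega>}) \<le> \<epsilon>"
    using ex_borel_subset_hit_with_infinite_rest[OF R \<Gamma> _ \<epsilon>] inf by auto
  define \<Gamma>' where "\<Gamma>' = \<Gamma> \<inter> {\<omega>\<in>space M. hits G \<omega> \<and> infinitely_hits (R - G) \<omega>}"
  have \<Gamma>' [measurable]: "\<Gamma>' \<in> sets M"
    unfolding \<Gamma>'_def by measurable
  have "\<Gamma> - \<Gamma>' = \<Gamma> - {\<omega>\<in>space M. hits G \<omega> \<and> infinitely_hits (R - G) \<omega>}"
    unfolding \<Gamma>'_def by blast
  then have "measure M \<Gamma> - \<epsilon> \<le> measure M \<Gamma>'"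
    using finite_measure_Diff[OF \<Gamma> \<Gamma>'] small by (simp add: \<Gamma>'_def)
  moreover have "R - (R - G) = G"
    using G(2) by blast
  ultimately show ?thesis
    using \<Gamma>' by (intro that[of "R - G" \<Gamma>']) (auto simp: \<Gamma>'_def)
qed

lemma ex_disjoint_family_all_hit:
  assumes "\<not> (AE \<omega> in M. finite (vals \<omega>))"
  shows "\<exists>G :: nat \<Rightarrow> real set. (\<forall>j. G j \<in> sets borel) \<and> disjoint_family G \<and>
    0 < measure M {\<omega>\<in>space M. \<forall>j. hits (G j) \<omega>}"
proof -
  define \<Gamma>\<^sub>0 where "\<Gamma>\<^sub>0 = {\<omega>\<in>space M. infinitely_hits UNIV \<omega>}"
  have \<Gamma>\<^sub>0: "\<Gamma>\<^sub>0 \<in> sets M"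
    unfolding \<Gamma>\<^sub>0_def by measurable
  have "emeasure M \<Gamma>\<^sub>0 \<noteq> 0"
    using AE_iff_measurable[OF \<Gamma>\<^sub>0] assms unfolding \<Gamma>\<^sub>0_def infinitely_hits_def by auto
  then have \<eta>: "0 < measure M \<Gamma>\<^sub>0" (is "0 < ?\<eta>")
    by (simp add: emeasure_eq_measure zero_less_measure_iff)
  define Inv where "Inv = (\<lambda>n (R, \<Gamma>). R \<in> sets borel \<and> \<Gamma> \<in> sets M \<and> (\<forall>\<omega>\<in>\<Gamma>. infinitely_hits R \<omega>)
    \<and> ?\<eta> / 2 + ?\<eta> / 2 ^ (n + 1) \<le> measure M \<Gamma>)"
  define Step where "Step = (\<lambda>(R, \<Gamma>) (R', \<Gamma>'). R' \<subseteq> R \<and> \<Gamma>' \<subseteq> \<Gamma> \<and> (\<forall>\<omega>\<in>\<Gamma>'. hits (R - R') \<omega>))"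
  have "\<exists>f. \<forall>n. Inv n (f n) \<and> Step (f n) (f (Suc n))"
  proof (rule dependent_nat_choice)
    show "\<exists>x. Inv 0 x"
      using \<Gamma>\<^sub>0 by (intro exI[of _ "(UNIV, \<Gamma>\<^sub>0)"]) (simp add: Inv_def \<Gamma>\<^sub>0_def)
  next
    fix x n assume "Inv n x"
    then obtain R \<Gamma> where x: "x = (R, \<Gamma>)" and R: "R \<in> sets borel" and \<Gamma>: "\<Gamma> \<in> sets M"
      and inf: "\<forall>\<omega>\<in>\<Gamma>. infinitely_hits R \<omega>" and big: "?\<eta> / 2 + ?\<eta> / 2 ^ (n + 1) \<le> measure M \<Gamma>"
      unfolding Inv_def by (cases x) auto
    have "0 < ?\<eta> / 2 ^ (n + 2)"
      using \<eta> by simp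
    then obtain R' \<Gamma>' where "R' \<in> sets borel" "\<Gamma>' \<in> sets M" "\<forall>\<omega>\<in>\<Gamma>'. infinitely_hits R' \<omega>"
      and lost: "measure M \<Gamma> - ?\<eta> / 2 ^ (n + 2) \<le> measure M \<Gamma>'"
      and "R' \<subseteq> R" "\<Gamma>' \<subseteq> \<Gamma>" "\<forall>\<omega>\<in>\<Gamma>'. hits (R - R') \<omega>"
      by (rule obtain_refinement[OF R \<Gamma> inf])
    moreover have "?\<eta> / 2 + ?\<eta> / 2 ^ (Suc n + 1) = ?\<eta> / 2 + ?\<eta> / 2 ^ (n + 1) - ?\<eta> / 2 ^ (n + 2)"
      by (simp add: field_simps)
    then have "?\<eta> / 2 + ?\<eta> / 2 ^ (Suc n + 1) \<le> measure M \<Gamma>'"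
      using big lost by linarith
    ultimately show "\<exists>y. Inv (Suc n) y \<and> Step x y"
      unfolding Inv_def Step_def x by (intro exI[of _ "(R', \<Gamma>')"]) simp
  qed
  then obtain f where f: "\<And>n. Inv n (f n)" "\<And>n. Step (f n) (f (Suc n))"
    by blast
  define R where "R = (\<lambda>n. fst (f n))"
  define \<Gamma> where "\<Gamma> = (\<lambda>n. snd (f n))"
  have \<Gamma>_sets: "\<Gamma> n \<in> sets M" and R_sets: "R n \<in> sets borel"
    and \<Gamma>_big: "?\<eta> / 2 + ?\<eta> / 2 ^ (n + 1) \<le> measure M (\<Gamma> n)" for n
    using f(1)[of n] unfolding Inv_def R_def \<Gamma>_def by (auto split: prod.splits)
  have R_Suc: "R (Suc n) \<subseteq> R n" and \<Gamma>_Suc: "\<Gamma> (Suc n) \<subseteq> \<Gamma> n"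
    and hits_step: "\<forall>\<omega>\<in>\<Gamma> (Suc n). hits (R n - R (Suc n)) \<omega>" for n
    using f(2)[of n] unfolding Step_def R_def \<Gamma>_def by (auto split: prod.splits)
  define G where "G = (\<lambda>n. R n - R (Suc n))"
  have "disjoint_family (\<lambda>n. - R (Suc n) - - R n)"
    using R_Suc by (intro disjoint_family_Suc) auto
  then have "disjoint_family G"
    unfolding G_def by (simp add: Diff_eq Int_commute)
  moreover have G_sets [measurable]: "G n \<in> sets borel" for n
    unfolding G_def using R_sets by auto
  moreover have "?\<eta> / 2 \<le> measure M (\<Inter>n. \<Gamma> n)"
  proof (rule LIMSEQ_le_const)
    show "(\<lambda>n. measure M (\<Gamma> n)) \<longlonglongrightarrow> measure M (\<Inter>n. \<Gamma> n)"
      using \<Gamma>_sets \<Gamma>_Suc by (intro finite_Lim_measure_decseq) (auto intro: decseq_SucI)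
    show "\<exists>N. \<forall>n\<ge>N. ?\<eta> / 2 \<le> measure M (\<Gamma> n)"
      using \<Gamma>_big \<eta> by (intro exI[of _ 0] allI impI order_trans[OF _ \<Gamma>_big]) simp
  qed
  moreover have "(\<Inter>n. \<Gamma> n) \<subseteq> {\<omega>\<in>space M. \<forall>j. hits (G j) \<omega>}"
    using hits_step sets.sets_into_space[OF \<Gamma>_sets] unfolding G_def by blast
  then have "measure M (\<Inter>n. \<Gamma> n) \<le> measure M {\<omega>\<in>space M. \<forall>j. hits (G j) \<omega>}"
    using \<Gamma>_sets by (intro finite_measure_mono) measurable
  ultimately have "0 < measure M {\<omega>\<in>space M. \<forall>j. hits (G j) \<omega>}"
    using \<eta> by linarith
  with G_sets \<open>disjoint_family G\<close> show ?thesis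
    by (intro exI[of _ G]) simp
qed

lemma AE_finite_vals_if_partitions_hit_finitely:
  assumes partitions: "\<And>A :: nat \<Rightarrow> real set. (\<forall>k. A k \<in> sets (restrict_space borel {0..1})) \<Longrightarrow>
      disjoint_family A \<Longrightarrow> (\<Union>k. A k) = {0..1} \<Longrightarrow> AE \<omega> in M. finite {k. hits (A k) \<omega>}"
  shows "AE \<omega> in M. finite (vals \<omega>)"
proof (rule ccontr)
  assume "\<not> ?thesis"
  then obtain G :: "nat \<Rightarrow> real set" where G [measurable]: "\<And>j. G j \<in> sets borel"
    and disj: "disjoint_family G" and pos: "0 < measure M {\<omega>\<in>space M. \<forall>j. hits (G j) \<omega>}"
    using ex_disjoint_family_all_hit by blast
  define A where "A = (\<lambda>k. {0..1} \<inter> (case k of 0 \<Rightarrow> - (\<Union>j. G j) | Suc j \<Rightarrow> G j))"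
  have "\<forall>k. A k \<in> sets (restrict_space borel {0..1})"
    by (auto simp: A_def sets_restrict_space_iff split: nat.split)
  moreover have "disjoint_family A"
    unfolding disjoint_family_on_def
  proof (intro ballI impI)
    fix k k' :: nat assume "k \<noteq> k'"
    then show "A k \<inter> A k' = {}"
      using disj by (cases k; cases k') (auto simp: A_def disjoint_family_on_def)
  qed
  moreover have "(\<Union>k. A k) = {0..1}"
  proof (intro equalityI subsetI)
    fix x :: real assume "x \<in> {0..1}"
    then have "x \<in> A 0 \<or> (\<exists>j. x \<in> A (Suc j))"
      unfolding A_def by auto
    then show "x \<in> (\<Union>k. A k)"
      by blast
  qed (auto simp: A_def)
  ultimately have "AE \<omega> in M. finite {k. hits (A k) \<omega>}"
    by (rule partitions)
  then have "AE \<omega> in M. \<not> (\<forall>j. hits (G j) \<omega>)"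
    using AE_space
  proof eventually_elim
    case (elim \<omega>)
    have "range Suc \<subseteq> {k. hits (A k) \<omega>}" if "\<forall>j. hits (G j) \<omega>"
      using that Y_in_unit_interval[OF elim(2)] unfolding A_def hits_def by auto
    moreover have "infinite (range Suc)"
      using range_inj_infinite inj_Suc by blast
    ultimately show ?case
      using elim(1) finite_subset by blast
  qed
  then have "emeasure M {\<omega>\<in>space M. \<forall>j. hits (G j) \<omega>} = 0"
    by (subst AE_iff_measurable[symmetric]) auto
  with pos show False
    by (simp add: emeasure_eq_measure)
qed

end

lemma FS_imp_FMV:
  assumes "FS M X"
  shows "FMV N M X"
  unfolding FMV_def
proof (intro allI impI)
  fix A :: "nat \<Rightarrow> 'b set" assume "(\<forall>k. A k \<in> sets N) \<and> disjoint_family A \<and> (\<Union>k. A k) = space N"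
  then have disj: "disjoint_family A"
    by blast
  have finite_parts: "finite {k. v \<in> A k}" for v
  proof (cases "\<exists>k. v \<in> A k")
    case True
    then obtain k where "v \<in> A k"
      by blast
    with disj have "{k. v \<in> A k} \<subseteq> {k}"
      unfolding disjoint_family_on_def by blast
    then show ?thesis
      by (rule finite_subset) simp
  qed simp
  from assms show "AE \<omega> in M. finite {k. \<exists>t\<ge>1. X t \<omega> \<in> A k}"
    unfolding FS_def
  proof eventually_elim
    case (elim \<omega>)
    have "{k. \<exists>t\<ge>1. X t \<omega> \<in> A k} = (\<Union>v\<in>(\<lambda>t. X t \<omega>) ` {1..}. {k. v \<in> A k})"
      by auto
    also have "finite \<dots>"
      using elim finite_parts by (rule finite_UN_I)
    finally show ?case .
  qed
qed

lemma unit_interval_process_Suc: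
  assumes "prob_space M" "process_in (restrict_space borel {0..1}) M X"
  shows "unit_interval_process M (\<lambda>t. X (Suc t))"
proof -
  have "X (Suc t) \<in> measurable M (restrict_space borel {0..1})" for t
    using assms(2) unfolding process_in_def by simp
  then have "X (Suc t) \<in> borel_measurable M" "X (Suc t) \<in> space M \<rightarrow> {0..1}" for t
    unfolding measurable_restrict_space2_iff by auto
  then show ?thesis
    using assms(1) unfolding unit_interval_process_def unit_interval_process_axioms_def
    by (blast dest: funcset_mem)
qed

theorem proposition6:
  fixes M :: "'a measure" and X :: "nat \<Rightarrow> 'a \<Rightarrow> real"
  assumes "prob_space M"
    and "process_in (restrict_space borel {0..1}) M X"
  shows "FMV (restrict_space borel {0..1}) M X \<longleftrightarrow> FS M X"
proof
  interpret unit_interval_process M "\<lambda>t. X (Suc t)"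
    using unit_interval_process_Suc[OF assms] .
  have from_one: "{1..} = range Suc"
    using atLeast_Suc_greaterThan[of 0] greaterThan_0 by simp
  have values_eq: "(\<lambda>t. X t \<omega>) ` {1..} = vals \<omega>" for \<omega>
    unfolding vals_def from_one by (simp add: image_image)
  have "{k. \<exists>t\<ge>1. X t \<omega> \<in> A k} = {k. hits (A k) \<omega>}" for \<omega> and A :: "nat \<Rightarrow> real set"
    unfolding hits_def by (auto dest: Suc_le_D)
  moreover assume "FMV (restrict_space borel {0..1}) M X"
  ultimately show "FS M X"
    unfolding FS_def values_eq
    by (intro AE_finite_vals_if_partitions_hit_finitely) (simp add: FMV_def space_restrict_space)
next
  assume "FS M X"
  then show "FMV (restrict_space borel {0..1}) M X"
    by (rule FS_imp_FMV)
qed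

end
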